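(* Let $r\geq2$ and let $\mathcal{K}$ be the class of finite $r$-uniform hypergraphs. Let $e\subseteq\mathbf{B}\in\mathcal{K}$, where $e$ is the hypergraph on $r$ vertices consisting of a single edge, and let $\mathbf{C}\in\mathcal{K}$ with $|\mathbf{C}|=N$. Then there is $\mathbf{D}\in\mathcal{K}$ extending $\mathbf{C}$ along $e\subseteq\mathbf{B}$ with $|\mathbf{D}|\leq cN^{r-1}$, where $c$ is a constant depending only on $|\mathbf{B}|$ (for the fixed $r$).
   Context: For $\mathbf{A}\subseteq\mathbf{B}$ and $\mathbf{C}\subseteq\mathbf{D}$ in $\mathcal{K}$ (induced substructures), $\mathbf{D}$ extends $\mathbf{C}$ along $\mathbf{A}\subseteq\mathbf{B}$ if $\mathbf{C}$ is a substructure of $\mathbf{D}$ and for every embedding $f:\mathbf{A}\to\mathbf{C}$ there is an embedding $h:\mathbf{B}\to\mathbf{D}$ with $h|_{\mathbf{A}}=f$. $|\mathbf{C}|$ is the number of vertices. *)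

theory Defs
  imports Complex_Main
begin

text \<open>A hypergraph is a pair (vertex set, edge set). Vertices are natural numbers
(every finite hypergraph is isomorphic to one on nat, and nat leaves room to
extend any finite structure).\<close>
type_synonym hg = "nat set \<times> nat set set"

definition verts :: "hg \<Rightarrow> nat set" where "verts H = fst H"
definition edges :: "hg \<Rightarrow> nat set set" where "edges H = snd H"

definition unif_hg :: "nat \<Rightarrow> hg \<Rightarrow> bool" where
  "unif_hg r H \<longleftrightarrow> finite (verts H) \<and> (\<forall>S\<in>edges H. S \<subseteq> verts H \<and> card S = r)"

definition embedding :: "(nat \<Rightarrow> nat) \<Rightarrow> hg \<Rightarrow> hg \<Rightarrow> bool" where
  "embedding f H1 H2 \<longleftrightarrow> f ` verts H1 \<subseteq> verts H2 \<and> inj_on f (verts H1) \<and>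
     (\<forall>S. S \<subseteq> verts H1 \<longrightarrow> (S \<in> edges H1 \<longleftrightarrow> f ` S \<in> edges H2))"

definition substructure :: "hg \<Rightarrow> hg \<Rightarrow> bool" where
  "substructure A B \<longleftrightarrow> verts A \<subseteq> verts B \<and> edges A = {S \<in> edges B. S \<subseteq> verts A}"

definition extends_along :: "hg \<Rightarrow> hg \<Rightarrow> hg \<Rightarrow> hg \<Rightarrow> bool" where
  "extends_along D C A B \<longleftrightarrow> substructure C D \<and>
     (\<forall>f. embedding f A C \<longrightarrow> (\<exists>h. embedding h B D \<and> (\<forall>x\<in>verts A. h x = f x)))"

definition single_edge :: "nat \<Rightarrow> hg \<Rightarrow> bool" where
  "single_edge r A \<longleftrightarrow> finite (verts A) \<and> card (verts A) = r \<and> edges A = {verts A}"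

end

theory Submission
  imports Defs "HOL-Library.FuncSet"
begin

text \<open>Let \<open>N = |C|\<close> and fix a vertex \<open>a0\<close> of \<open>A\<close>. An embedding \<open>f\<close> of \<open>A\<close> into \<open>C\<close> is determined by its
restriction \<open>g\<close> to \<open>A - {a0}\<close> (an injective \<open>g\<close>, of which there are at most \<open>N\<^sup>r\<^sup>-\<^sup>1\<close>) together
with the image \<open>v\<close> of \<open>a0\<close>. For every such \<open>g\<close> add one fresh copy of the vertices of
\<open>B - A\<close>; for every admissible \<open>v\<close> add the image of \<open>B\<close> under the map sending \<open>a0\<close> to \<open>v\<close>,
\<open>A - {a0}\<close> along \<open>g\<close> and \<open>B - A\<close> to the copy of \<open>g\<close>. All the copies of \<open>B\<close> for one \<open>g\<close>
share their new vertices, so only \<open>N\<^sup>r\<^sup>-\<^sup>1 |B|\<close> vertices are added; an edge meeting the copy of \<open>g\<close>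
remembers \<open>g\<close>, and the images of \<open>a0\<close> avoid the range of \<open>g\<close>, which keeps each extension
an induced embedding.\<close>

lemma ex_inj_on_avoiding:
  fixes P :: "'a set" and V :: "nat set"
  assumes "finite P" "finite V"
  obtains e :: "'a \<Rightarrow> nat" where "inj_on e P" "e ` P \<inter> V = {}"
proof -
  obtain e0 :: "'a \<Rightarrow> nat" where e0: "inj_on e0 P"
    using finite_imp_inj_to_nat_seg[OF assms(1)] by metis
  define M where "M = Suc (Max (insert 0 V))"
  have "x < M" if "x \<in> V" for x
    using assms(2) that unfolding M_def by (simp add: le_imp_less_Suc)
  then have "(\<lambda>p. M + e0 p) ` P \<inter> V = {}" by fastforce
  moreover have "inj_on (\<lambda>p. M + e0 p) P" using e0 by (simp add: inj_on_def)
  ultimately show thesis using that by blast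
qed

locale extension_construction =
  fixes r :: nat and A B C :: hg and a0 :: nat and fresh :: "(nat \<Rightarrow> nat) \<times> nat \<Rightarrow> nat"
  assumes B_unif: "unif_hg r B" and C_unif: "unif_hg r C"
    and A_sub_B: "substructure A B" and a0_in_A: "a0 \<in> verts A"
    and fresh_inj: "inj_on fresh (((verts A - {a0}) \<rightarrow>\<^sub>E verts C) \<times> (verts B - verts A))"
    and fresh_disjoint: "fresh ` (((verts A - {a0}) \<rightarrow>\<^sub>E verts C) \<times> (verts B - verts A)) \<inter> verts C = {}"
begin

definition keys :: "(nat \<Rightarrow> nat) set" where
  "keys = {g \<in> (verts A - {a0}) \<rightarrow>\<^sub>E verts C. inj_on g (verts A - {a0})}"

definition admissible :: "(nat \<Rightarrow> nat) \<Rightarrow> nat \<Rightarrow> bool" where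
  "admissible g v \<longleftrightarrow> g \<in> keys \<and> v \<in> verts C \<and> v \<notin> g ` (verts A - {a0})"

definition copy_map :: "(nat \<Rightarrow> nat) \<Rightarrow> nat \<Rightarrow> nat \<Rightarrow> nat" where
  "copy_map g v y = (if y = a0 then v else if y \<in> verts A then g y else fresh (g, y))"

definition new_edges :: "nat set set" where
  "new_edges = {copy_map g v ` S | g v S. admissible g v \<and> S \<in> edges B \<and> \<not> S \<subseteq> verts A}"

definition ext_graph :: hg where
  "ext_graph = (verts C \<union> fresh ` (keys \<times> (verts B - verts A)), edges C \<union> new_edges)"

lemma verts_ext_graph: "verts ext_graph = verts C \<union> fresh ` (keys \<times> (verts B - verts A))"
  by (simp add: ext_graph_def verts_def)

lemma edges_ext_graph: "edges ext_graph = edges C \<union> new_edges"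
  by (simp add: ext_graph_def edges_def)

lemma finite_verts_B: "finite (verts B)"
  using B_unif by (simp add: unif_hg_def)

lemma finite_verts_C: "finite (verts C)"
  using C_unif by (simp add: unif_hg_def)

lemma A_verts_subset: "verts A \<subseteq> verts B"
  using A_sub_B by (simp add: substructure_def)

lemma finite_verts_A: "finite (verts A)"
  using A_verts_subset finite_verts_B finite_subset by blast

lemma edges_C: "S \<in> edges C \<Longrightarrow> S \<subseteq> verts C"
  using C_unif by (simp add: unif_hg_def)

lemma edges_B: "S \<in> edges B \<Longrightarrow> S \<subseteq> verts B \<and> card S = r"
  using B_unif by (simp add: unif_hg_def)

lemma keys_subset: "keys \<subseteq> (verts A - {a0}) \<rightarrow>\<^sub>E verts C"
  by (simp add: keys_def)

lemma finite_keys: "finite keys"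
  using finite_verts_A finite_verts_C by (intro finite_subset[OF keys_subset] finite_PiE) auto

lemma fresh_inj_on_keys: "inj_on fresh (keys \<times> (verts B - verts A))"
  using keys_subset by (intro inj_on_subset[OF fresh_inj]) auto

lemma fresh_notin_C: "g \<in> keys \<Longrightarrow> y \<in> verts B - verts A \<Longrightarrow> fresh (g, y) \<notin> verts C"
  using fresh_disjoint keys_subset by blast

lemma copy_map_outside: "y \<notin> verts A \<Longrightarrow> copy_map g v y = fresh (g, y)"
  using a0_in_A by (auto simp: copy_map_def)

lemma copy_map_in_C: "admissible g v \<Longrightarrow> y \<in> verts A \<Longrightarrow> copy_map g v y \<in> verts C"
  by (auto simp: copy_map_def admissible_def keys_def)

lemma copy_map_in_ext_graph:
  "admissible g v \<Longrightarrow> y \<in> verts B \<Longrightarrow> copy_map g v y \<in> verts ext_graph"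
  using copy_map_in_C[of g v y] copy_map_outside[of y g v]
  by (cases "y \<in> verts A") (auto simp: verts_ext_graph admissible_def)

lemma copy_map_in_C_iff:
  assumes "admissible g v" "y \<in> verts B"
  shows "copy_map g v y \<in> verts C \<longleftrightarrow> y \<in> verts A"
  using assms copy_map_in_C copy_map_outside fresh_notin_C by (auto simp: admissible_def)

text \<open>Two copies of \<open>B\<close> with the same key are jointly injective: the only overlap could come
from \<open>a0\<close>, and its images avoid the range of the key.\<close>
lemma copy_map_eq_imp_eq:
  assumes "admissible g v" "admissible g v'" "y \<in> verts B" "z \<in> verts B"
    and "copy_map g v y = copy_map g v' z"
  shows "y = z"
proof -
  have "y \<in> verts A \<longleftrightarrow> z \<in> verts A"
    using assms copy_map_in_C_iff by metis
  then consider "y \<in> verts A" "z \<in> verts A" | "y \<notin> verts A" "z \<notin> verts A" by blast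
  then show ?thesis
  proof cases
    case 1
    with assms show ?thesis
      by (auto simp: copy_map_def admissible_def keys_def inj_on_def split: if_splits)
  next
    case 2
    with assms fresh_inj_on_keys show ?thesis
      by (auto simp: copy_map_outside admissible_def inj_on_def)
  qed
qed

lemma copy_map_eq_fresh:
  assumes "admissible g v" "admissible g' v'" "y \<in> verts B - verts A" "z \<in> verts B"
    and "copy_map g v y = copy_map g' v' z"
  shows "g = g' \<and> z = y"
proof -
  have "z \<notin> verts A"
    using assms copy_map_in_C_iff by (metis DiffE)
  with assms fresh_inj_on_keys show ?thesis
    by (auto simp: copy_map_outside admissible_def inj_on_def)
qed

lemma copy_map_image_eq_imp_subset:
  assumes "admissible g v" "admissible g v'" "S \<subseteq> verts B" "T \<subseteq> verts B"
    and "copy_map g v ` S = copy_map g v' ` T"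
  shows "S \<subseteq> T"
proof
  fix s assume "s \<in> S"
  then have "copy_map g v s \<in> copy_map g v' ` T" using assms(5) by (metis imageI)
  then obtain t where "t \<in> T" "copy_map g v s = copy_map g v' t" by (elim imageE)
  with copy_map_eq_imp_eq[OF assms(1,2)] assms(3,4) \<open>s \<in> S\<close> show "s \<in> T"
    by (metis subsetD)
qed

lemma new_edge_not_in_C:
  assumes "T \<in> new_edges" shows "\<not> T \<subseteq> verts C"
proof -
  obtain g v S where T: "T = copy_map g v ` S" "admissible g v" "S \<in> edges B" "\<not> S \<subseteq> verts A"
    using assms unfolding new_edges_def by blast
  then obtain y where "y \<in> S" "y \<notin> verts A" by blast
  then have "copy_map g v y \<notin> verts C"
    using copy_map_in_C_iff[OF T(2)] edges_B[OF T(3)] by blast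
  then show ?thesis using T(1) \<open>y \<in> S\<close> by blast
qed

lemma new_edge_preimage:
  assumes adm: "admissible g v" and S: "S \<subseteq> verts B" "\<not> S \<subseteq> verts A"
    and edge: "copy_map g v ` S \<in> new_edges"
  shows "S \<in> edges B"
proof -
  obtain g' v' T where T: "copy_map g v ` S = copy_map g' v' ` T" "admissible g' v'" "T \<in> edges B"
    using edge unfolding new_edges_def by blast
  have TB: "T \<subseteq> verts B" using edges_B T(3) by blast
  obtain y where y: "y \<in> S" "y \<notin> verts A" using S(2) by blast
  then have "copy_map g v y \<in> copy_map g' v' ` T" using T(1) by (metis imageI)
  then obtain z where "z \<in> T" "copy_map g v y = copy_map g' v' z" by (elim imageE)
  then have "g = g'"
    using copy_map_eq_fresh[OF adm T(2)] S(1) TB y by blast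
  then have adm': "admissible g v'" using T(2) by simp
  have "copy_map g v ` S = copy_map g v' ` T" using T(1) \<open>g = g'\<close> by simp
  then have "S = T"
    using copy_map_image_eq_imp_subset[OF adm adm' S(1) TB]
      copy_map_image_eq_imp_subset[OF adm' adm TB S(1)] by blast
  then show ?thesis using T(3) by simp
qed

lemma ext_graph_edge:
  assumes "S \<in> edges ext_graph"
  shows "S \<subseteq> verts ext_graph \<and> card S = r"
  using assms unfolding edges_ext_graph
proof
  assume "S \<in> edges C"
  then show ?thesis using C_unif by (auto simp: unif_hg_def verts_ext_graph)
next
  assume "S \<in> new_edges"
  then obtain g v T where T: "S = copy_map g v ` T" "admissible g v" "T \<in> edges B"
    unfolding new_edges_def by blast
  have "inj_on (copy_map g v) T"
    using copy_map_eq_imp_eq[OF T(2) T(2)] edges_B[OF T(3)] by (auto simp: inj_on_def)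
  then show ?thesis
    using T edges_B[OF T(3)] copy_map_in_ext_graph card_image by blast
qed

lemma ext_graph_unif: "unif_hg r ext_graph"
  using finite_keys finite_verts_B finite_verts_C ext_graph_edge
  by (simp add: unif_hg_def verts_ext_graph)

lemma substructure_C_ext_graph: "substructure C ext_graph"
  using edges_C new_edge_not_in_C
  by (auto simp: substructure_def verts_ext_graph edges_ext_graph)

lemma admissible_restrict:
  assumes "inj_on f (verts A)" "f ` verts A \<subseteq> verts C"
  shows "admissible (restrict f (verts A - {a0})) (f a0)"
  using assms a0_in_A by (auto simp: admissible_def keys_def inj_on_def)

lemma copy_map_restrict:
  "y \<in> verts A \<Longrightarrow> copy_map (restrict f (verts A - {a0})) (f a0) y = f y"
  by (simp add: copy_map_def)

lemma embedding_copy_map: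
  assumes f: "embedding f A C"
  defines "h \<equiv> copy_map (restrict f (verts A - {a0})) (f a0)"
  shows "embedding h B ext_graph"
  unfolding embedding_def
proof (intro conjI allI impI)
  have adm: "admissible (restrict f (verts A - {a0})) (f a0)"
    using f admissible_restrict by (simp add: embedding_def)
  show "h ` verts B \<subseteq> verts ext_graph"
    using copy_map_in_ext_graph[OF adm] by (auto simp: h_def)
  show "inj_on h (verts B)"
    using copy_map_eq_imp_eq[OF adm adm] by (auto simp: h_def inj_on_def)
  fix S assume SB: "S \<subseteq> verts B"
  show "S \<in> edges B \<longleftrightarrow> h ` S \<in> edges ext_graph"
  proof (cases "S \<subseteq> verts A")
    case True
    then have "h ` S = f ` S"
      unfolding h_def by (intro image_cong) (auto simp: copy_map_restrict)
    moreover have "f ` S \<subseteq> verts C" using f True by (auto simp: embedding_def)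
    moreover have "S \<in> edges A \<longleftrightarrow> f ` S \<in> edges C" using f True by (simp add: embedding_def)
    moreover have "S \<in> edges B \<longleftrightarrow> S \<in> edges A" using A_sub_B True by (auto simp: substructure_def)
    ultimately show ?thesis using new_edge_not_in_C by (auto simp: edges_ext_graph)
  next
    case False
    then obtain y where y: "y \<in> S" "y \<notin> verts A" by blast
    have "h y \<notin> verts C"
      using copy_map_in_C_iff[OF adm] y SB unfolding h_def by blast
    then have "h ` S \<notin> edges C" using edges_C y(1) by blast
    then show ?thesis
      using new_edge_preimage[OF adm SB False] adm False
      by (auto simp: edges_ext_graph new_edges_def h_def)
  qed
qed

lemma extends_along_ext_graph: "extends_along ext_graph C A B"
  unfolding extends_along_def
  using substructure_C_ext_graph embedding_copy_map copy_map_restrict by blast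

lemma card_ext_graph:
  "card (verts ext_graph)
     \<le> card (verts C) + card (verts C) ^ (card (verts A) - 1) * card (verts B - verts A)"
proof -
  let ?X = "verts B - verts A"
  have "card keys \<le> card ((verts A - {a0}) \<rightarrow>\<^sub>E verts C)"
    using keys_subset finite_verts_A finite_verts_C by (intro card_mono) (auto intro: finite_PiE)
  also have "\<dots> = card (verts C) ^ (card (verts A) - 1)"
    using finite_verts_A a0_in_A by (simp add: card_PiE)
  finally have keys: "card keys \<le> card (verts C) ^ (card (verts A) - 1)" .
  have "card (verts ext_graph) \<le> card (verts C) + card (fresh ` (keys \<times> ?X))"
    unfolding verts_ext_graph by (rule card_Un_le)
  also have "card (fresh ` (keys \<times> ?X)) \<le> card (keys \<times> ?X)"
    using finite_keys finite_verts_B by (intro card_image_le) simp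
  also have "\<dots> = card keys * card ?X"
    by (rule card_cartesian_product)
  also have "\<dots> \<le> card (verts C) ^ (card (verts A) - 1) * card ?X"
    using keys by simp
  finally show ?thesis by simp
qed

end

theorem exists_extends_along_card_le:
  assumes "unif_hg r B" "unif_hg r C" "substructure A B" "verts A \<noteq> {}"
  shows "\<exists>D. unif_hg r D \<and> extends_along D C A B \<and>
    card (verts D) \<le> card (verts C) + card (verts C) ^ (card (verts A) - 1) * card (verts B - verts A)"
proof -
  obtain a0 where a0: "a0 \<in> verts A" using assms(4) by blast
  have "finite (verts B)" and fin_C: "finite (verts C)"
    using assms(1,2) by (simp_all add: unif_hg_def)
  moreover have "verts A \<subseteq> verts B" using assms(3) by (simp add: substructure_def)
  ultimately have "finite (((verts A - {a0}) \<rightarrow>\<^sub>E verts C) \<times> (verts B - verts A))"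
    by (auto intro: finite_PiE finite_subset)
  then obtain fresh :: "(nat \<Rightarrow> nat) \<times> nat \<Rightarrow> nat" where
    "inj_on fresh (((verts A - {a0}) \<rightarrow>\<^sub>E verts C) \<times> (verts B - verts A))"
    "fresh ` (((verts A - {a0}) \<rightarrow>\<^sub>E verts C) \<times> (verts B - verts A)) \<inter> verts C = {}"
    using fin_C by (rule ex_inj_on_avoiding)
  then interpret extension_construction r A B C a0 fresh
    using assms a0 by unfold_locales
  show ?thesis using ext_graph_unif extends_along_ext_graph card_ext_graph by blast
qed

theorem mainTheorem19:
  fixes r b :: nat
  assumes "r \<ge> 2"
  shows "\<exists>c::real. \<forall>A B C.
    unif_hg r B \<and> card (verts B) = b \<and> single_edge r A \<and> substructure A B \<and> unif_hg r C
    \<longrightarrow> (\<exists>D. unif_hg r D \<and> extends_along D C A B \<and>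
              real (card (verts D)) \<le> c * real (card (verts C)) ^ (r - 1))"
proof (intro exI[of _ "1 + real b"] allI impI)
  fix A B C
  assume hyps: "unif_hg r B \<and> card (verts B) = b \<and> single_edge r A \<and> substructure A B \<and> unif_hg r C"
  let ?N = "card (verts C)"
  have A: "card (verts A) = r" "verts A \<noteq> {}"
    using hyps assms by (auto simp: single_edge_def)
  obtain D where D: "unif_hg r D" "extends_along D C A B"
    "card (verts D) \<le> ?N + ?N ^ (r - 1) * card (verts B - verts A)"
    using exists_extends_along_card_le[of r B C A] hyps A by auto
  have "card (verts B - verts A) \<le> b"
    using hyps card_mono[of "verts B" "verts B - verts A"] by (auto simp: unif_hg_def)
  moreover have "?N \<le> ?N ^ (r - 1)"
    using assms by (cases "?N = 0") (simp_all add: self_le_power)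
  ultimately have "card (verts D) \<le> ?N ^ (r - 1) + ?N ^ (r - 1) * b"
    using D(3) by (meson add_le_mono mult_le_mono2 order_trans)
  then have "card (verts D) \<le> (1 + b) * ?N ^ (r - 1)"
    by (simp add: algebra_simps)
  then have "real (card (verts D)) \<le> real ((1 + b) * ?N ^ (r - 1))"
    by (rule of_nat_mono)
  then have "real (card (verts D)) \<le> (1 + real b) * real ?N ^ (r - 1)"
    by (simp add: distrib_right)
  with D(1,2) show "\<exists>D. unif_hg r D \<and> extends_along D C A B \<and>
      real (card (verts D)) \<le> (1 + real b) * real ?N ^ (r - 1)" by blast
qed

end
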